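(* Let $n\ge 2$ and let $F:(\mathcal{M}^n)^n\to\mathbb{R}$ be a nonnegative function which is additive in each variable and which vanishes whenever two of its arguments are proportional matrices of rank one. Define $G:(\mathcal{E}^n)^n\to\mathbb{R}$ by $G(E_1,\dots,E_n)=F(A_{E_1},\dots,A_{E_n})$. Let $S,T_1,T_2\subset\mathbb{R}^n$ be nondegenerate centered segments satisfying $T_1+\mathbb{R}S=T_2+\mathbb{R}S$. Then $G(T_1,S,E_1,\dots,E_{n-2})=G(T_2,S,E_1,\dots,E_{n-2})$ for all $E_1,\dots,E_{n-2}\in\mathcal{E}^n$. The same holds when the roles of the first two arguments are played by any two other arguments, in any order (i.e. $T_i$ placed in position $p$, $S$ in position $q\ne p$, and arbitrary centered ellipsoids in the remaining positions).
   Context: $\mathcal{M}^n$ is the set of real symmetric positive semidefinite $n\times n$ matrices; "additive in each variable" means $F(\dots,A+A',\dots)=F(\dots,A,\dots)+F(\dots,A',\dots)$ in each argument with the others fixed. A centered ellipsoid is a set $TB^n$ where $B^n$ is the Euclidean unit ball of $\mathbb{R}^n$ and $T:\mathbb{R}^n\to\mathbb{R}^n$ is any linear map (possibly degenerate); $\mathcal{E}^n$ is the set of centered ellipsoids (this includes centered segments $[-x,x]$ and $\{0\}$). For $E\in\mathcal{E}^n$, $A_E\in\mathcal{M}^n$ is the unique matrix with $h(E,u)^2=\langle u,A_Eu\rangle$ for all $u\in\mathbb{R}^n$, where $h(E,u)=\max_{x\in E}\langle x,u\rangle$ is the support function (if $E=TB^n$ then $A_E=TT^*$). For a set $S$, $\mathbb{R}S=\{\lambda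 x:\lambda\in\mathbb{R},x\in S\}$, and $+$ denotes Minkowski addition. A centered segment is nondegenerate if it has positive length. *)

theory Defs
  imports "HOL-Analysis.Analysis"
begin

definition psd_mat :: "real^'n^'n \<Rightarrow> bool" where
  "psd_mat A \<longleftrightarrow> transpose A = A \<and> (\<forall>x. 0 \<le> x \<bullet> (A *v x))"

definition centered_ellipsoid :: "(real^'n) set \<Rightarrow> bool" where
  "centered_ellipsoid E \<longleftrightarrow> (\<exists>T :: real^'n^'n. E = (\<lambda>x. T *v x) ` cball 0 1)"

definition supp_fun :: "(real^'n) set \<Rightarrow> real^'n \<Rightarrow> real" where
  "supp_fun E u = (SUP x\<in>E. x \<bullet> u)"

definition ell_mat :: "(real^'n) set \<Rightarrow> real^'n^'n" where
  "ell_mat E = (THE A. psd_mat A \<and> (\<forall>u. (supp_fun E u)^2 = u \<bullet> (A *v u)))"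

definition nondeg_centered_segment :: "(real^'n) set \<Rightarrow> bool" where
  "nondeg_centered_segment S \<longleftrightarrow> (\<exists>x. x \<noteq> 0 \<and> S = closed_segment (-x) x)"

definition real_span_set :: "(real^'n) set \<Rightarrow> (real^'n) set" where
  "real_span_set S = {c *\<^sub>R x | c x. x \<in> S}"

definition mink_sum :: "(real^'n) set \<Rightarrow> (real^'n) set \<Rightarrow> (real^'n) set" where
  "mink_sum A B = {a + b | a b. a \<in> A \<and> b \<in> B}"

definition nonneg_on_psd :: "(('n \<Rightarrow> real^'n^'n) \<Rightarrow> real) \<Rightarrow> bool" where
  "nonneg_on_psd F \<longleftrightarrow> (\<forall>M. (\<forall>i. psd_mat (M i)) \<longrightarrow> 0 \<le> F M)"

definition multiadditive_on_psd :: "(('n \<Rightarrow> real^'n^'n) \<Rightarrow> real) \<Rightarrow> bool" where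
  "multiadditive_on_psd F \<longleftrightarrow>
     (\<forall>M i A A'. (\<forall>j. psd_mat (M j)) \<longrightarrow> psd_mat A \<longrightarrow> psd_mat A' \<longrightarrow>
        F (M(i := A + A')) = F (M(i := A)) + F (M(i := A')))"

definition vanishes_prop_rank_one :: "(('n \<Rightarrow> real^'n^'n) \<Rightarrow> real) \<Rightarrow> bool" where
  "vanishes_prop_rank_one F \<longleftrightarrow>
     (\<forall>M i j. (\<forall>k. psd_mat (M k)) \<longrightarrow> i \<noteq> j \<longrightarrow> rank (M i) = 1 \<longrightarrow> rank (M j) = 1 \<longrightarrow>
        (\<exists>c. M i = c *\<^sub>R M j) \<longrightarrow> F M = 0)"

end

theory Submission imports Defs begin

text \<open>
  Fix all arguments except the one in position p; with S = [-s,s] in position q the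
  remaining map \<Phi> is additive and nonnegative on positive semidefinite matrices and
  kills every t t^T with t parallel to s. The segment hypothesis forces either both
  t1, t2 to be parallel to s, or t2 = \<plusminus>(t1 + m s). In the second case
  g(x) = \<Phi>((t1 + x s)(t1 + x s)^T) satisfies g(x+y) + g(x-y) = 2 g(x) by the
  parallelogram law, so g is affine along arithmetic progressions; being nonnegative,
  g is constant.
\<close>

definition outer_prod :: "real^'n \<Rightarrow> real^'n^'n" where
  "outer_prod t = (\<chi> i j. t$i * t$j)"

lemma outer_prod_mult_vec: "outer_prod t *v x = (t \<bullet> x) *\<^sub>R t"
  by (simp add: outer_prod_def matrix_vector_mult_def inner_vec_def vec_eq_iff
      sum_distrib_left mult_ac)

lemma psd_mat_outer_prod: "psd_mat (outer_prod t)"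
proof -
  have "transpose (outer_prod t) = outer_prod t"
    by (simp add: transpose_def outer_prod_def vec_eq_iff mult.commute)
  moreover have "0 \<le> x \<bullet> (outer_prod t *v x)" for x
    by (simp add: outer_prod_mult_vec inner_commute)
  ultimately show ?thesis by (simp add: psd_mat_def)
qed

lemma outer_prod_scaleR: "outer_prod (c *\<^sub>R t) = c\<^sup>2 *\<^sub>R outer_prod t"
  by (simp add: outer_prod_def vec_eq_iff power2_eq_square mult_ac)

lemma outer_prod_uminus: "outer_prod (- t) = outer_prod t"
  by (simp add: outer_prod_def vec_eq_iff)

lemma outer_prod_parallelogram:
  "outer_prod (x + y) + outer_prod (x - y) = outer_prod x + outer_prod x + outer_prod y + outer_prod y"
  by (simp add: outer_prod_def vec_eq_iff algebra_simps)

lemma rank_outer_prod: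
  assumes "t \<noteq> 0"
  shows "rank (outer_prod t) = 1"
proof -
  have "range (\<lambda>x. outer_prod t *v x) = span {t}"
  proof
    show "range (\<lambda>x. outer_prod t *v x) \<subseteq> span {t}"
      by (auto simp: outer_prod_mult_vec span_singleton)
  next
    show "span {t} \<subseteq> range (\<lambda>x. outer_prod t *v x)"
    proof
      fix y assume "y \<in> span {t}"
      then obtain c where y: "y = c *\<^sub>R t" by (auto simp: span_singleton)
      have "outer_prod t *v ((c / (t \<bullet> t)) *\<^sub>R t) = y"
        using assms by (simp add: outer_prod_mult_vec y)
      then show "y \<in> range (\<lambda>x. outer_prod t *v x)" by (metis rangeI)
    qed
  qed
  then show ?thesis using assms by (simp add: rank_dim_range)
qed

lemma psd_mat_add: "psd_mat A \<Longrightarrow> psd_mat B \<Longrightarrow> psd_mat (A + B)"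
  by (simp add: psd_mat_def matrix_vector_mult_add_rdistrib inner_add_right transpose_def vec_eq_iff)

lemma symmetric_mat_eqI:
  fixes A B :: "real^'n^'n"
  assumes "transpose A = A" "transpose B = B" "\<And>u. u \<bullet> (A *v u) = u \<bullet> (B *v u)"
  shows "A = B"
proof -
  define C where "C = A - B"
  have C_transpose: "transpose C = C" using assms(1,2)
    by (simp add: C_def transpose_def vec_eq_iff)
  have C_sym: "x \<bullet> (C *v y) = y \<bullet> (C *v x)" for x y
  proof -
    have "x \<bullet> (C *v y) = (y v* transpose C) \<bullet> x"
      by (metis dot_lmul_matrix inner_commute transpose_matrix_vector transpose_transpose)
    also have "\<dots> = y \<bullet> (C *v x)" using C_transpose by (simp add: dot_lmul_matrix)
    finally show ?thesis .
  qed
  have C_quad: "u \<bullet> (C *v u) = 0" for u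
    using assms(3) by (simp add: C_def matrix_vector_mult_diff_rdistrib inner_diff_right)
  have "x \<bullet> (C *v y) = 0" for x y
  proof -
    have "(x + y) \<bullet> (C *v (x + y)) = x \<bullet> (C *v x) + y \<bullet> (C *v y) + 2 * (x \<bullet> (C *v y))"
      using C_sym[of y x] by (simp add: matrix_vector_right_distrib inner_add_left inner_add_right)
    then show ?thesis using C_quad by simp
  qed
  then have "C *v y = 0 *v y" for y by (metis inner_eq_zero_iff matrix_vector_mult_0)
  then have "C = 0" by (metis matrix_eq)
  then show ?thesis by (simp add: C_def)
qed

lemma ell_mat_eqI:
  assumes "psd_mat A" "\<And>u. (supp_fun E u)\<^sup>2 = u \<bullet> (A *v u)"
  shows "ell_mat E = A"
  unfolding ell_mat_def
proof (rule the_equality)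
  show "psd_mat A \<and> (\<forall>u. (supp_fun E u)\<^sup>2 = u \<bullet> (A *v u))" using assms by blast
next
  fix B assume B: "psd_mat B \<and> (\<forall>u. (supp_fun E u)\<^sup>2 = u \<bullet> (B *v u))"
  show "B = A"
  proof (rule symmetric_mat_eqI)
    show "transpose B = B" "transpose A = A"
      using B assms(1) by (simp_all add: psd_mat_def)
    show "u \<bullet> (B *v u) = u \<bullet> (A *v u)" for u
      using B assms(2)[of u] by simp
  qed
qed

lemma closed_segment_neg_eq: "closed_segment (- t) t = {a *\<^sub>R t | a. \<bar>a\<bar> \<le> 1}"
proof -
  have "(1 - c) *\<^sub>R (- t) + c *\<^sub>R t = (2 * c - 1) *\<^sub>R t" for c
    by (simp add: algebra_simps flip: scaleR_add_left)
  moreover have "\<bar>a\<bar> \<le> 1 \<longleftrightarrow> (\<exists>c. 0 \<le> c \<and> c \<le> 1 \<and> a = 2 * c - 1)" for a :: real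
    by (auto intro!: exI[of _ "(a + 1) / 2"] simp: field_simps)
  ultimately show ?thesis
    unfolding closed_segment_def by fastforce
qed

lemma supp_fun_closed_segment: "supp_fun (closed_segment (- t) t) u = \<bar>t \<bullet> u\<bar>"
  unfolding supp_fun_def
proof (rule cSup_eq_maximum)
  show "\<bar>t \<bullet> u\<bar> \<in> (\<lambda>x. x \<bullet> u) ` closed_segment (- t) t"
    by (cases "t \<bullet> u \<ge> 0") (auto intro!: image_eqI[where x=t] image_eqI[where x="-t"])
next
  fix y assume "y \<in> (\<lambda>x. x \<bullet> u) ` closed_segment (- t) t"
  then obtain a where "\<bar>a\<bar> \<le> 1" "y = a * (t \<bullet> u)"
    by (auto simp: closed_segment_neg_eq)
  then show "y \<le> \<bar>t \<bullet> u\<bar>"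
    by (metis abs_ge_self abs_ge_zero abs_mult mult_left_le_one_le order_trans)
qed

lemma ell_mat_closed_segment: "ell_mat (closed_segment (- t) t) = outer_prod t"
  by (rule ell_mat_eqI)
     (auto simp: psd_mat_outer_prod supp_fun_closed_segment outer_prod_mult_vec
        power2_eq_square inner_commute)

lemma supp_fun_ellipsoid: "supp_fun ((\<lambda>x. T *v x) ` cball 0 1) u = norm (transpose T *v u)"
  unfolding supp_fun_def image_comp o_def
proof (rule cSup_eq_maximum)
  define w where "w = transpose T *v u"
  have eq: "(T *v x) \<bullet> u = x \<bullet> w" for x
    by (simp add: w_def dot_lmul_matrix[symmetric] inner_commute)
  have "norm w \<in> (\<lambda>x. (T *v x) \<bullet> u) ` cball 0 1"
  proof (cases "w = 0")
    case True then show ?thesis by (auto simp: eq intro!: image_eqI[where x=0])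
  next
    case False
    then show ?thesis
      by (auto simp: eq intro!: image_eqI[where x="w /\<^sub>R norm w"])
         (simp add: dot_square_norm power2_eq_square field_simps)
  qed
  then show "norm (transpose T *v u) \<in> (\<lambda>x. (T *v x) \<bullet> u) ` cball 0 1"
    by (simp only: w_def)
  fix y assume "y \<in> (\<lambda>x. (T *v x) \<bullet> u) ` cball 0 1"
  then obtain x where x: "norm x \<le> 1" "y = x \<bullet> w" by (auto simp: eq)
  have "x \<bullet> w \<le> norm x * norm w" by (rule norm_cauchy_schwarz)
  also have "\<dots> \<le> norm w" using x(1) by (simp add: mult_left_le_one_le)
  finally show "y \<le> norm (transpose T *v u)" using x by (simp add: w_def)
qed

lemma psd_mat_ell_mat:
  fixes E :: "(real^'n) set"
  assumes "centered_ellipsoid E"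
  shows "psd_mat (ell_mat E)"
proof -
  obtain T :: "real^'n^'n" where E: "E = (\<lambda>x. T *v x) ` cball 0 1"
    using assms by (auto simp: centered_ellipsoid_def)
  have quad: "u \<bullet> ((T ** transpose T) *v u) = (transpose T *v u) \<bullet> (transpose T *v u)" for u
    by (metis dot_lmul_matrix matrix_vector_mul_assoc transpose_matrix_vector)
  have psd: "psd_mat (T ** transpose T)"
    unfolding psd_mat_def by (simp add: matrix_transpose_mul quad)
  have "ell_mat E = T ** transpose T"
    by (rule ell_mat_eqI[OF psd]) (simp add: E supp_fun_ellipsoid quad dot_square_norm)
  with psd show ?thesis by simp
qed

lemma nonneg_Jensen_const:
  fixes g :: "real \<Rightarrow> real"
  assumes Jensen: "\<And>a b. g (a + b) + g (a - b) = 2 * g a"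
    and nonneg: "\<And>x. 0 \<le> g x"
  shows "g x = g 0"
proof -
  have "g (real k * y) = g 0 + real k * (g y - g 0)
      \<and> g (real (Suc k) * y) = g 0 + real (Suc k) * (g y - g 0)" for k y
  proof (induction k)
    case 0 then show ?case by simp
  next
    case (Suc k)
    have "g (real (Suc (Suc k)) * y) = 2 * g (real (Suc k) * y) - g (real k * y)"
      using Jensen[of "real (Suc k) * y" y] by (simp add: algebra_simps)
    with Suc show ?case by (simp add: algebra_simps)
  qed
  then have progression: "g (real k * y) = g 0 + real k * (g y - g 0)" for k y
    by blast
  have odd: "g (- x) - g 0 = - (g x - g 0)" using Jensen[of 0 x] by simp
  show ?thesis
  proof (rule ccontr)
    assume "g x \<noteq> g 0"
    then obtain y where below: "g 0 - g y > 0"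
    proof (cases "g x < g 0")
      case False
      with \<open>g x \<noteq> g 0\<close> odd have "g 0 - g (- x) > 0" by linarith
      then show ?thesis by (rule that)
    qed (simp add: that)
    obtain k :: nat where "g 0 / (g 0 - g y) < real k" using reals_Archimedean2 by blast
    then have "g 0 < real k * (g 0 - g y)" using below by (simp add: field_simps)
    then show False using progression[of k y] nonneg[of "real k * y"] by (simp add: algebra_simps)
  qed
qed

lemma additive_nonneg_outer_prod_shift:
  fixes \<Phi> :: "real^'n^'n \<Rightarrow> real"
  assumes add: "\<And>A B. psd_mat A \<Longrightarrow> psd_mat B \<Longrightarrow> \<Phi> (A + B) = \<Phi> A + \<Phi> B"
    and nonneg: "\<And>A. psd_mat A \<Longrightarrow> 0 \<le> \<Phi> A"
    and vanish: "\<And>k. \<Phi> (outer_prod (k *\<^sub>R s)) = 0"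
  shows "\<Phi> (outer_prod (t + m *\<^sub>R s)) = \<Phi> (outer_prod t)"
proof -
  define g where "g x = \<Phi> (outer_prod (t + x *\<^sub>R s))" for x
  have double: "\<Phi> (A + A) = 2 * \<Phi> A" if "psd_mat A" for A
    using add[OF that that] by simp
  have add_outer: "\<Phi> (outer_prod u + outer_prod v) = \<Phi> (outer_prod u) + \<Phi> (outer_prod v)" for u v
    by (simp add: add psd_mat_outer_prod)
  have "g (a + b) + g (a - b) = 2 * g a" for a b
  proof -
    let ?u = "t + a *\<^sub>R s" and ?v = "b *\<^sub>R s"
    have "g (a + b) + g (a - b) = \<Phi> (outer_prod (?u + ?v)) + \<Phi> (outer_prod (?u - ?v))"
      by (simp add: g_def algebra_simps)
    also have "\<dots> = \<Phi> (outer_prod (?u + ?v) + outer_prod (?u - ?v))"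
      by (simp only: add_outer)
    also have "\<dots> = \<Phi> ((outer_prod ?u + outer_prod ?v) + (outer_prod ?u + outer_prod ?v))"
      by (subst outer_prod_parallelogram) (simp only: add_ac)
    also have "\<dots> = 2 * \<Phi> (outer_prod ?u + outer_prod ?v)"
      by (simp only: double psd_mat_add psd_mat_outer_prod)
    also have "\<dots> = 2 * g a"
      by (simp add: add_outer vanish g_def)
    finally show ?thesis .
  qed
  then have "g m = g 0"
    by (rule nonneg_Jensen_const) (simp add: g_def nonneg psd_mat_outer_prod)
  then show ?thesis by (simp add: g_def)
qed

lemma additive_nonneg_outer_prod_eq:
  fixes \<Phi> :: "real^'n^'n \<Rightarrow> real"
  assumes add: "\<And>A B. psd_mat A \<Longrightarrow> psd_mat B \<Longrightarrow> \<Phi> (A + B) = \<Phi> A + \<Phi> B"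
    and nonneg: "\<And>A. psd_mat A \<Longrightarrow> 0 \<le> \<Phi> A"
    and vanish: "\<And>k. \<Phi> (outer_prod (k *\<^sub>R s)) = 0"
    and t2: "t2 = a *\<^sub>R t1 + l *\<^sub>R s" "\<bar>a\<bar> \<le> 1"
    and t1: "t1 = a' *\<^sub>R t2 + l' *\<^sub>R s" "\<bar>a'\<bar> \<le> 1"
  shows "\<Phi> (outer_prod t1) = \<Phi> (outer_prod t2)"
proof (cases "a' * a = 1")
  case False
  define c where "c = (a' * l + l') / (1 - a' * a)"
  have "(1 - a' * a) *\<^sub>R t1 = (a' * l + l') *\<^sub>R s"
    using t1 t2 by (simp add: algebra_simps)
  then have "(1 / (1 - a' * a)) *\<^sub>R ((1 - a' * a) *\<^sub>R t1) = c *\<^sub>R s"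
    by (simp add: c_def)
  then have t1_par: "t1 = c *\<^sub>R s"
    using False by simp
  then have "t2 = (a * c + l) *\<^sub>R s"
    using t2 by (simp add: algebra_simps)
  with t1_par show ?thesis by (simp only: vanish)
next
  case True
  then have "\<bar>a'\<bar> * \<bar>a\<bar> = 1" by (simp flip: abs_mult)
  moreover have "\<bar>a'\<bar> * \<bar>a\<bar> \<le> \<bar>a\<bar>"
    using t1(2) by (simp add: mult_left_le_one_le)
  ultimately have "a = 1 \<or> a = -1" using t2(2) by linarith
  then obtain m where "outer_prod t2 = outer_prod (t1 + m *\<^sub>R s)"
  proof
    assume "a = -1"
    then have "outer_prod t2 = outer_prod (- (t1 + (- l) *\<^sub>R s))" using t2(1) by simp
    then show ?thesis by (simp only: outer_prod_uminus that)
  qed (use t2(1) that in simp)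
  then show ?thesis
    using additive_nonneg_outer_prod_shift[OF add nonneg vanish] by simp
qed

lemma mink_sum_segment_span_decomp:
  assumes "mink_sum (closed_segment (- t1) t1) (real_span_set (closed_segment (- s) s))
         = mink_sum (closed_segment (- t2) t2) (real_span_set (closed_segment (- s) s))"
  obtains a l where "\<bar>a\<bar> \<le> 1" "t2 = a *\<^sub>R t1 + l *\<^sub>R s"
proof -
  have "t2 \<in> mink_sum (closed_segment (- t2) t2) (real_span_set (closed_segment (- s) s))"
    unfolding mink_sum_def real_span_set_def
    by (rule CollectI, rule exI[of _ t2], rule exI[of _ 0]) (auto intro!: exI[of _ 0] exI[of _ s])
  then have "t2 \<in> mink_sum (closed_segment (- t1) t1) (real_span_set (closed_segment (- s) s))"
    by (simp only: assms)
  then obtain a c b where "\<bar>a\<bar> \<le> 1" "t2 = a *\<^sub>R t1 + c *\<^sub>R (b *\<^sub>R s)"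
    unfolding mink_sum_def real_span_set_def closed_segment_neg_eq by blast
  with that[of a "c * b"] show ?thesis by simp
qed

lemma vanishes_on_parallel_outer_prod:
  assumes "multiadditive_on_psd F" "vanishes_prop_rank_one F"
    and N_psd: "\<And>j. psd_mat (N j)" and N_q: "N q = outer_prod s" "s \<noteq> 0" and "p \<noteq> q"
  shows "F (N(p := outer_prod (k *\<^sub>R s))) = 0"
proof (cases "k = 0")
  case True
  have zero: "outer_prod 0 + outer_prod 0 = outer_prod (0 :: real^'n)"
    by (simp add: outer_prod_def vec_eq_iff)
  have "F (N(p := outer_prod 0 + outer_prod 0)) = F (N(p := outer_prod 0)) + F (N(p := outer_prod 0))"
    using assms(1) N_psd psd_mat_outer_prod unfolding multiadditive_on_psd_def by blast
  then have "F (N(p := outer_prod 0)) = F (N(p := outer_prod 0)) + F (N(p := outer_prod 0))"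
    by (simp only: zero)
  then have "F (N(p := outer_prod 0)) = 0" by linarith
  with True show ?thesis by simp
next
  case False
  let ?M = "N(p := outer_prod (k *\<^sub>R s))"
  have "\<forall>j. psd_mat (?M j)" using N_psd psd_mat_outer_prod by simp
  moreover have "rank (?M p) = 1" "rank (?M q) = 1"
    using False N_q \<open>p \<noteq> q\<close> by (simp_all add: rank_outer_prod)
  moreover have "?M p = k\<^sup>2 *\<^sub>R ?M q" using N_q \<open>p \<noteq> q\<close> by (simp add: outer_prod_scaleR)
  ultimately show ?thesis
    using assms(2) \<open>p \<noteq> q\<close> unfolding vanishes_prop_rank_one_def by blast
qed

theorem lemma4:
  fixes F :: "('n::finite \<Rightarrow> real^'n^'n) \<Rightarrow> real"
    and S T1 T2 :: "(real^'n) set"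
    and E :: "'n \<Rightarrow> (real^'n) set"
    and p q :: 'n
  assumes "CARD('n) \<ge> 2"
    and "nonneg_on_psd F"
    and "multiadditive_on_psd F"
    and "vanishes_prop_rank_one F"
    and "nondeg_centered_segment S"
    and "nondeg_centered_segment T1"
    and "nondeg_centered_segment T2"
    and "mink_sum T1 (real_span_set S) = mink_sum T2 (real_span_set S)"
    and "p \<noteq> q"
    and "\<forall>i. centered_ellipsoid (E i)"
  shows "F (\<lambda>i. ell_mat ((E(p := T1, q := S)) i)) = F (\<lambda>i. ell_mat ((E(p := T2, q := S)) i))"
proof -
  obtain s t1 t2 where "s \<noteq> 0" and S: "S = closed_segment (- s) s"
    and T1: "T1 = closed_segment (- t1) t1" and T2: "T2 = closed_segment (- t2) t2"
    using assms(5-7) by (auto simp: nondeg_centered_segment_def)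
  define N where "N = (\<lambda>i. ell_mat (E i))(q := outer_prod s)"
  have N_psd: "psd_mat (N j)" for j
    using assms(10) by (auto simp: N_def psd_mat_outer_prod psd_mat_ell_mat)
  have N_q: "N q = outer_prod s" by (simp add: N_def)
  have args: "(\<lambda>i. ell_mat ((E(p := closed_segment (- t) t, q := S)) i)) = N(p := outer_prod t)" for t
    using \<open>p \<noteq> q\<close> by (auto simp: fun_eq_iff N_def ell_mat_closed_segment S)
  obtain a l where "\<bar>a\<bar> \<le> 1" "t2 = a *\<^sub>R t1 + l *\<^sub>R s"
    using assms(8) unfolding S T1 T2 by (rule mink_sum_segment_span_decomp)
  moreover obtain a' l' where "\<bar>a'\<bar> \<le> 1" "t1 = a' *\<^sub>R t2 + l' *\<^sub>R s"
    using assms(8)[symmetric] unfolding S T1 T2 by (rule mink_sum_segment_span_decomp)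
  ultimately have "F (N(p := outer_prod t1)) = F (N(p := outer_prod t2))"
  proof (intro additive_nonneg_outer_prod_eq[where \<Phi> = "\<lambda>A. F (N(p := A))"])
    show "F (N(p := A + B)) = F (N(p := A)) + F (N(p := B))" if "psd_mat A" "psd_mat B" for A B
      using assms(3) N_psd that unfolding multiadditive_on_psd_def by blast
    show "0 \<le> F (N(p := A))" if "psd_mat A" for A
      using assms(2) N_psd that unfolding nonneg_on_psd_def by (metis fun_upd_apply)
    show "F (N(p := outer_prod (k *\<^sub>R s))) = 0" for k
      by (rule vanishes_on_parallel_outer_prod[of F N, OF assms(3,4) N_psd N_q \<open>s \<noteq> 0\<close> \<open>p \<noteq> q\<close>])
  qed
  then show ?thesis using args T1 T2 by simp
qed

end
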